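(* For any simple undirected graph $G$, $$n_G(\mathcal{C}_3\oplus\mathcal{L}_2)=\frac13\sum_{\{st,uv\}\in Q}\Big(\sum_{w\in\Gamma(s)\setminus\{s,t,u,v\}}a_{tw}+\sum_{w\in\Gamma(u)\setminus\{s,t,u,v\}}a_{vw}\Big).$$
   Context: $a_{ij}$ adjacency entries, $\Gamma(x)$ neighbourhood of $x$. $Q$ is the set of unordered pairs $\{st,uv\}$ of edges with $s,t,u,v$ pairwise distinct. $\mathcal{C}_3\oplus\mathcal{L}_2$ is the disjoint union of a triangle and a single edge (5 vertices). $n_G(F)$ counts (not necessarily induced) subgraphs isomorphic to $F$. *)

theory Defs
  imports Complex_Main
begin

definition simple_graph :: "'a set \<Rightarrow> ('a \<Rightarrow> 'a \<Rightarrow> bool) \<Rightarrow> bool" where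
  "simple_graph V E \<longleftrightarrow> finite V \<and> (\<forall>x y. E x y \<longrightarrow> E y x) \<and> (\<forall>x. \<not> E x x)
     \<and> (\<forall>x y. E x y \<longrightarrow> x \<in> V \<and> y \<in> V)"

definition edges :: "'a set \<Rightarrow> ('a \<Rightarrow> 'a \<Rightarrow> bool) \<Rightarrow> 'a set set" where
  "edges V E = {{x, y} | x y. x \<in> V \<and> y \<in> V \<and> E x y}"

definition adj :: "('a \<Rightarrow> 'a \<Rightarrow> bool) \<Rightarrow> 'a \<Rightarrow> 'a \<Rightarrow> real" where
  "adj E i j = (if E i j then 1 else 0)"

definition nbhd :: "'a set \<Rightarrow> ('a \<Rightarrow> 'a \<Rightarrow> bool) \<Rightarrow> 'a \<Rightarrow> 'a set" where
  "nbhd V E x = {y \<in> V. E x y}"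

text \<open>n_G(F): number of (not necessarily induced) subgraphs (W, D) of G
(W \<subseteq> V, D a set of edges of G with endpoints in W) isomorphic to the pattern
graph F = (VF, EF), where EF is a set of 2-element subsets of VF.\<close>
definition subgraph_count ::
  "'a set \<Rightarrow> ('a \<Rightarrow> 'a \<Rightarrow> bool) \<Rightarrow> 'b set \<Rightarrow> 'b set set \<Rightarrow> nat" where
  "subgraph_count V E VF EF = card {(W, D). W \<subseteq> V \<and> D \<subseteq> edges V E \<and> (\<forall>e\<in>D. e \<subseteq> W)
      \<and> (\<exists>f. bij_betw f VF W \<and> (\<forall>x\<in>VF. \<forall>y\<in>VF. {x, y} \<in> EF \<longleftrightarrow> {f x, f y} \<in> D))}"

definition C3_L2_vertices :: "nat set" where
  "C3_L2_vertices = {0, 1, 2, 3, 4}"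

definition C3_L2_edges :: "nat set set" where
  "C3_L2_edges = {{0, 1}, {1, 2}, {0, 2}, {3, 4}}"

definition Qpairs :: "'a set \<Rightarrow> ('a \<Rightarrow> 'a \<Rightarrow> bool) \<Rightarrow> 'a set set set" where
  "Qpairs V E = {{{s, t}, {u, v}} | s t u v. E s t \<and> E u v \<and>
      s \<noteq> t \<and> s \<noteq> u \<and> s \<noteq> v \<and> t \<noteq> u \<and> t \<noteq> v \<and> u \<noteq> v}"

text \<open>Endpoint labelling of an unordered edge e = st: s = first_end e, t = second_end e.\<close>
definition first_end :: "'a set \<Rightarrow> 'a" where
  "first_end e = (SOME x. x \<in> e)"

definition second_end :: "'a set \<Rightarrow> 'a" where
  "second_end e = (SOME y. y \<in> e \<and> y \<noteq> first_end e)"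

definition Q_term :: "'a set \<Rightarrow> ('a \<Rightarrow> 'a \<Rightarrow> bool) \<Rightarrow> 'a set set \<Rightarrow> real" where
  "Q_term V E p = (\<Sum>e\<in>p. \<Sum>w \<in> nbhd V E (first_end e) - \<Union>p. adj E (second_end e) w)"

end

theory Submission
  imports Defs
begin

(* Both sides count pairs (T, F) of a triangle T and an edge F disjoint from it: a copy of
   C_3 + L_2 is exactly such a pair.  On the right, an element of Q together with one of its
   two edges e is an ordered pair (e, f) of disjoint edges, and the summand for e counts the
   vertices w outside e and f adjacent to both ends of e.  The triple (e, f, w) is the triangle
   e + w with the disjoint edge f and the marked vertex w, so every pair (T, F) is counted
   once for each of the three vertices of T. *)

lemma sum_over_unordered_pairs:
  assumes "finite R" "sym R" "irrefl R"
  shows "(\<Sum>p\<in>(\<lambda>(x, y). {x, y}) ` R. \<Sum>x\<in>p. h x p) = (\<Sum>(x, y)\<in>R. h x {x, y})"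
proof -
  let ?pairs = "(\<lambda>(x, y). {x, y}) ` R"
  have distinct: "x \<noteq> y" if "(x, y) \<in> R" for x y
    using assms(3) that by (auto simp: irrefl_def)
  have other: "{x, y} - {x} = {y}" "{x, y} - {y} = {x}" if "x \<noteq> y" for x y :: 'a
    using that by auto
  have "bij_betw (\<lambda>(x, y). ({x, y}, x)) R (Sigma ?pairs (\<lambda>p. p))"
  proof (rule bij_betw_byWitness[where f' = "\<lambda>(p, x). (x, the_elem (p - {x}))"])
    show "\<forall>a\<in>R. (\<lambda>(p, x). (x, the_elem (p - {x}))) ((\<lambda>(x, y). ({x, y}, x)) a) = a"
      by (auto simp: other distinct)
    show "\<forall>a\<in>Sigma ?pairs (\<lambda>p. p). (\<lambda>(x, y). ({x, y}, x)) ((\<lambda>(p, x). (x, the_elem (p - {x}))) a) = a"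
      by (auto simp: other distinct insert_commute)
    show "(\<lambda>(x, y). ({x, y}, x)) ` R \<subseteq> Sigma ?pairs (\<lambda>p. p)"
      by auto
    show "(\<lambda>(p, x). (x, the_elem (p - {x}))) ` Sigma ?pairs (\<lambda>p. p) \<subseteq> R"
      using assms(2) by (auto simp: other distinct dest: symD)
  qed
  then have "(\<Sum>(x, y)\<in>R. h x {x, y}) = (\<Sum>(p, x)\<in>Sigma ?pairs (\<lambda>p. p). h x p)"
    by (subst sum.reindex_bij_betw[symmetric]) (auto simp: case_prod_unfold)
  also have "\<dots> = (\<Sum>p\<in>?pairs. \<Sum>x\<in>p. h x p)"
    using assms(1) by (subst sum.Sigma) auto
  finally show ?thesis ..
qed

lemma simple_graphD:
  assumes "simple_graph V E"
  shows "finite V" and "E x y \<Longrightarrow> E y x" and "\<not> E x x"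
    and "E x y \<Longrightarrow> x \<in> V" and "E x y \<Longrightarrow> y \<in> V"
  using assms unfolding simple_graph_def by blast+

lemma edgesE:
  assumes "simple_graph V E" "F \<in> edges V E"
  obtains s t where "F = {s, t}" "s \<noteq> t" "E s t" "s \<in> V" "t \<in> V"
  using assms unfolding edges_def simple_graph_def by blast

lemma doubleton_in_edges_iff:
  assumes "simple_graph V E"
  shows "{x, y} \<in> edges V E \<longleftrightarrow> E x y"
  using assms unfolding edges_def simple_graph_def by (auto simp: doubleton_eq_iff) blast

lemma finite_edges:
  assumes "simple_graph V E"
  shows "finite (edges V E)"
proof -
  have "edges V E \<subseteq> Pow V"
    unfolding edges_def by auto
  then show ?thesis
    using simple_graphD(1)[OF assms] by (simp add: finite_subset)
qed

definition triangles :: "'a set \<Rightarrow> ('a \<Rightarrow> 'a \<Rightarrow> bool) \<Rightarrow> 'a set set" where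
  "triangles V E = {A. A \<subseteq> V \<and> card A = 3 \<and> (\<forall>x\<in>A. \<forall>y\<in>A. x \<noteq> y \<longrightarrow> E x y)}"

definition triangle_edge_pairs :: "'a set \<Rightarrow> ('a \<Rightarrow> 'a \<Rightarrow> bool) \<Rightarrow> ('a set \<times> 'a set) set" where
  "triangle_edge_pairs V E = {(A, F). A \<in> triangles V E \<and> F \<in> edges V E \<and> A \<inter> F = {}}"

lemma triangle_edge_pairsI:
  assumes "simple_graph V E" "distinct [a, b, c, d, e]"
    and "E a b" "E b c" "E a c" "E d e"
  shows "({a, b, c}, {d, e}) \<in> triangle_edge_pairs V E"
  using assms simple_graphD[OF assms(1)]
  unfolding triangle_edge_pairs_def triangles_def
  by (auto simp: doubleton_in_edges_iff card_insert_if)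

lemma triangle_edge_pairsE:
  assumes "simple_graph V E" "(A, F) \<in> triangle_edge_pairs V E"
  obtains a b c d e where "distinct [a, b, c, d, e]" "A = {a, b, c}" "F = {d, e}"
    "E a b" "E b c" "E a c" "E d e"
proof -
  from assms(2) have A: "card A = 3" "\<forall>x\<in>A. \<forall>y\<in>A. x \<noteq> y \<longrightarrow> E x y"
    and F: "F \<in> edges V E" "A \<inter> F = {}"
    by (auto simp: triangle_edge_pairs_def triangles_def)
  from A(1) obtain a b c where "A = {a, b, c}" "a \<noteq> b" "b \<noteq> c" "a \<noteq> c"
    by (auto simp: card_3_iff)
  moreover obtain d e where "F = {d, e}" "d \<noteq> e" "E d e"
    using edgesE[OF assms(1) F(1)] by metis
  ultimately show ?thesis
    using that[of a b c d e] A(2) F(2) by auto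
qed

lemma finite_triangle_edge_pairs:
  assumes "simple_graph V E"
  shows "finite (triangle_edge_pairs V E)"
proof -
  have "triangle_edge_pairs V E \<subseteq> Pow V \<times> edges V E"
    unfolding triangle_edge_pairs_def triangles_def by auto
  then show ?thesis
    using assms simple_graphD(1) finite_edges by (metis finite_Pow_iff finite_SigmaI finite_subset)
qed

definition triangle_plus_edge :: "'a set \<times> 'a set \<Rightarrow> 'a set \<times> 'a set set" where
  "triangle_plus_edge = (\<lambda>(A, F). (A \<union> F, {{x, y} | x y. x \<in> A \<and> y \<in> A \<and> x \<noteq> y} \<union> {F}))"

definition vertices_in_two_edges :: "'a set set \<Rightarrow> 'a set" where
  "vertices_in_two_edges D = {x. \<exists>e1\<in>D. \<exists>e2\<in>D. e1 \<noteq> e2 \<and> x \<in> e1 \<and> x \<in> e2}"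

lemma triangle_plus_edge_explicit:
  assumes "distinct [a, b, c, d, e]"
  shows "triangle_plus_edge ({a, b, c}, {d, e}) = ({a, b, c, d, e}, {{a, b}, {b, c}, {a, c}, {d, e}})"
  using assms unfolding triangle_plus_edge_def by (auto simp: doubleton_eq_iff insert_commute)

lemma vertices_in_two_edges_explicit:
  assumes "distinct [a, b, c, d, e]"
  shows "vertices_in_two_edges {{a, b}, {b, c}, {a, c}, {d, e}} = {a, b, c}"
  using assms unfolding vertices_in_two_edges_def by (auto simp: doubleton_eq_iff)

lemma inj_on_triangle_plus_edge:
  assumes "simple_graph V E"
  shows "inj_on triangle_plus_edge (triangle_edge_pairs V E)"
proof -
  have "(\<lambda>(W, D). (vertices_in_two_edges D, W - vertices_in_two_edges D)) (triangle_plus_edge AF) = AF"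
    if "AF \<in> triangle_edge_pairs V E" for AF
  proof -
    obtain A F where "AF = (A, F)"
      by force
    with that obtain a b c d e where "distinct [a, b, c, d, e]" "A = {a, b, c}" "F = {d, e}"
      using triangle_edge_pairsE[OF assms] by metis
    with \<open>AF = (A, F)\<close> show ?thesis
      by (auto simp: triangle_plus_edge_explicit vertices_in_two_edges_explicit)
  qed
  then show ?thesis
    by (rule inj_on_inverseI)
qed

definition C3_L2_iso :: "(nat \<Rightarrow> 'a) \<Rightarrow> 'a set \<Rightarrow> 'a set set \<Rightarrow> bool" where
  "C3_L2_iso f W D \<longleftrightarrow> bij_betw f C3_L2_vertices W
     \<and> (\<forall>x\<in>C3_L2_vertices. \<forall>y\<in>C3_L2_vertices. {x, y} \<in> C3_L2_edges \<longleftrightarrow> {f x, f y} \<in> D)"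

lemma C3_L2_iso_explicit:
  assumes "distinct [a, b, c, d, e]"
  shows "C3_L2_iso (\<lambda>i. [a, b, c, d, e] ! i) {a, b, c, d, e} {{a, b}, {b, c}, {a, c}, {d, e}}"
  using assms
  unfolding C3_L2_iso_def bij_betw_def inj_on_def C3_L2_vertices_def C3_L2_edges_def
  by (auto simp: doubleton_eq_iff)

lemma C3_L2_isoD:
  assumes "C3_L2_iso f W D" and "\<forall>g\<in>D. \<exists>x\<in>W. \<exists>y\<in>W. g = {x, y}"
  shows "distinct [f 0, f 1, f 2, f 3, f 4]" "W = {f 0, f 1, f 2, f 3, f 4}"
    "D = {{f 0, f 1}, {f 1, f 2}, {f 0, f 2}, {f 3, f 4}}"
proof -
  have bij: "bij_betw f C3_L2_vertices W"
    and iso: "\<forall>x\<in>C3_L2_vertices. \<forall>y\<in>C3_L2_vertices. {x, y} \<in> C3_L2_edges \<longleftrightarrow> {f x, f y} \<in> D"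
    using assms(1) unfolding C3_L2_iso_def by auto
  show "W = {f 0, f 1, f 2, f 3, f 4}"
    using bij unfolding bij_betw_def C3_L2_vertices_def by auto
  show "distinct [f 0, f 1, f 2, f 3, f 4]"
    using bij unfolding bij_betw_def inj_on_def C3_L2_vertices_def by (auto simp del: One_nat_def)
  have "g \<in> {{f 0, f 1}, {f 1, f 2}, {f 0, f 2}, {f 3, f 4}}" if "g \<in> D" for g
  proof -
    obtain x y where "x \<in> W" "y \<in> W" "g = {x, y}"
      using assms(2) \<open>g \<in> D\<close> by blast
    then obtain i j where ij: "i \<in> C3_L2_vertices" "j \<in> C3_L2_vertices" "g = {f i, f j}"
      using bij unfolding bij_betw_def by blast
    with iso \<open>g \<in> D\<close> have "{i, j} \<in> C3_L2_edges"
      by auto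
    with ij show ?thesis
      unfolding C3_L2_edges_def by (auto simp: doubleton_eq_iff insert_commute)
  qed
  moreover have "{{f 0, f 1}, {f 1, f 2}, {f 0, f 2}, {f 3, f 4}} \<subseteq> D"
    using iso unfolding C3_L2_vertices_def C3_L2_edges_def by auto
  ultimately show "D = {{f 0, f 1}, {f 1, f 2}, {f 0, f 2}, {f 3, f 4}}"
    by blast
qed

definition C3_L2_copies :: "'a set \<Rightarrow> ('a \<Rightarrow> 'a \<Rightarrow> bool) \<Rightarrow> ('a set \<times> 'a set set) set" where
  "C3_L2_copies V E = {(W, D). W \<subseteq> V \<and> D \<subseteq> edges V E \<and> (\<forall>e\<in>D. e \<subseteq> W) \<and> (\<exists>f. C3_L2_iso f W D)}"

lemma C3_L2_copies_eq_image:
  assumes G: "simple_graph V E"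
  shows "C3_L2_copies V E = triangle_plus_edge ` triangle_edge_pairs V E"
proof (intro equalityI subsetI)
  fix q assume "q \<in> C3_L2_copies V E"
  then obtain W D f where q: "q = (W, D)" and D: "D \<subseteq> edges V E" "\<forall>e\<in>D. e \<subseteq> W"
    and iso: "C3_L2_iso f W D"
    unfolding C3_L2_copies_def by blast
  have "\<forall>g\<in>D. \<exists>x\<in>W. \<exists>y\<in>W. g = {x, y}"
    using D by (metis edgesE[OF G] insert_subset subsetD)
  note explicit = C3_L2_isoD[OF iso this]
  have "E (f 0) (f 1)" "E (f 1) (f 2)" "E (f 0) (f 2)" "E (f 3) (f 4)"
    using D(1) by (auto simp: explicit(3) doubleton_in_edges_iff[OF G])
  then have "({f 0, f 1, f 2}, {f 3, f 4}) \<in> triangle_edge_pairs V E"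
    using triangle_edge_pairsI[OF G explicit(1)] by blast
  moreover have "q = triangle_plus_edge ({f 0, f 1, f 2}, {f 3, f 4})"
    using q explicit by (simp add: triangle_plus_edge_explicit)
  ultimately show "q \<in> triangle_plus_edge ` triangle_edge_pairs V E"
    by blast
next
  fix q assume "q \<in> triangle_plus_edge ` triangle_edge_pairs V E"
  then obtain A F where AF: "(A, F) \<in> triangle_edge_pairs V E" and q: "q = triangle_plus_edge (A, F)"
    by auto
  then obtain a b c d e where abcde: "distinct [a, b, c, d, e]" "A = {a, b, c}" "F = {d, e}"
    "E a b" "E b c" "E a c" "E d e"
    using triangle_edge_pairsE[OF G] by metis
  then show "q \<in> C3_L2_copies V E"
    using q C3_L2_iso_explicit[OF abcde(1)] simple_graphD[OF G]
    unfolding C3_L2_copies_def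
    by (auto simp: triangle_plus_edge_explicit doubleton_in_edges_iff[OF G])
qed

lemma subgraph_count_C3_L2:
  assumes "simple_graph V E"
  shows "subgraph_count V E C3_L2_vertices C3_L2_edges = card (triangle_edge_pairs V E)"
proof -
  have "subgraph_count V E C3_L2_vertices C3_L2_edges = card (C3_L2_copies V E)"
    unfolding subgraph_count_def C3_L2_copies_def C3_L2_iso_def by simp
  also have "\<dots> = card (triangle_edge_pairs V E)"
    unfolding C3_L2_copies_eq_image[OF assms]
    by (rule card_image[OF inj_on_triangle_plus_edge[OF assms]])
  finally show ?thesis .
qed

lemma first_second_end_doubleton:
  assumes "s \<noteq> t"
  shows "{first_end {s, t}, second_end {s, t}} = {s, t}"
proof -
  have first: "first_end {s, t} \<in> {s, t}"
    unfolding first_end_def by (rule someI[where x = s]) (rule insertI1)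
  have second: "second_end {s, t} \<in> {s, t} \<and> second_end {s, t} \<noteq> first_end {s, t}"
  proof (cases "first_end {s, t} = s")
    case True
    show ?thesis
      unfolding second_end_def by (rule someI[where x = t]) (use True assms in simp)
  next
    case False
    show ?thesis
      unfolding second_end_def by (rule someI[where x = s]) (use False in simp)
  qed
  from first second show ?thesis
    by (metis doubleton_eq_iff insertE singletonD)
qed

definition common_nbhd_outside :: "'a set \<Rightarrow> ('a \<Rightarrow> 'a \<Rightarrow> bool) \<Rightarrow> 'a set \<Rightarrow> 'a set \<Rightarrow> 'a set" where
  "common_nbhd_outside V E e U = {w \<in> V - U. \<forall>x\<in>e. E x w}"

lemma sum_adj_eq_card_common_nbhd_outside:
  assumes "finite V" "s \<noteq> t"
  shows "(\<Sum>w \<in> nbhd V E (first_end {s, t}) - U. adj E (second_end {s, t}) w)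
    = card (common_nbhd_outside V E {s, t} U)"
proof -
  let ?a = "first_end {s, t}" and ?b = "second_end {s, t}"
  have "finite (nbhd V E ?a - U)"
    using assms(1) unfolding nbhd_def by simp
  then have "(\<Sum>w \<in> nbhd V E ?a - U. adj E ?b w) = card {w \<in> nbhd V E ?a - U. E ?b w}"
    unfolding adj_def by (simp add: sum.inter_filter[symmetric])
  also have "{w \<in> nbhd V E ?a - U. E ?b w} = common_nbhd_outside V E {?a, ?b} U"
    unfolding common_nbhd_outside_def nbhd_def by auto
  finally show ?thesis
    by (simp add: first_second_end_doubleton[OF assms(2)])
qed

lemma Q_term_eq_sum_card:
  assumes "simple_graph V E" "p \<in> Qpairs V E"
  shows "Q_term V E p = (\<Sum>e\<in>p. real (card (common_nbhd_outside V E e (\<Union>p))))"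
  unfolding Q_term_def
proof (rule sum.cong[OF refl])
  fix e assume "e \<in> p"
  then obtain s t where "e = {s, t}" "s \<noteq> t"
    using assms(2) unfolding Qpairs_def by blast
  then show "(\<Sum>w \<in> nbhd V E (first_end e) - \<Union>p. adj E (second_end e) w)
      = real (card (common_nbhd_outside V E e (\<Union>p)))"
    using sum_adj_eq_card_common_nbhd_outside[OF simple_graphD(1)[OF assms(1)]] by simp
qed

definition disjoint_edge_pairs :: "'a set \<Rightarrow> ('a \<Rightarrow> 'a \<Rightarrow> bool) \<Rightarrow> ('a set \<times> 'a set) set" where
  "disjoint_edge_pairs V E = {(e, f). e \<in> edges V E \<and> f \<in> edges V E \<and> e \<inter> f = {}}"

lemma finite_disjoint_edge_pairs:
  assumes "simple_graph V E"
  shows "finite (disjoint_edge_pairs V E)"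
proof -
  have "disjoint_edge_pairs V E \<subseteq> edges V E \<times> edges V E"
    unfolding disjoint_edge_pairs_def by auto
  then show ?thesis
    using finite_edges[OF assms] by (simp add: finite_subset)
qed

lemma sym_disjoint_edge_pairs: "sym (disjoint_edge_pairs V E)"
  unfolding disjoint_edge_pairs_def sym_def by auto

lemma irrefl_disjoint_edge_pairs: "irrefl (disjoint_edge_pairs V E)"
proof -
  have "e \<noteq> {}" if "e \<in> edges V E" for e
    using that unfolding edges_def by auto
  then show ?thesis
    unfolding irrefl_def disjoint_edge_pairs_def by auto
qed

lemma Qpairs_eq_image:
  assumes "simple_graph V E"
  shows "Qpairs V E = (\<lambda>(e, f). {e, f}) ` disjoint_edge_pairs V E"
proof (intro equalityI subsetI)
  fix p assume "p \<in> Qpairs V E"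
  then obtain s t u v where p: "p = {{s, t}, {u, v}}" and "E s t" "E u v"
    "s \<noteq> u" "s \<noteq> v" "t \<noteq> u" "t \<noteq> v"
    unfolding Qpairs_def by blast
  then have "({s, t}, {u, v}) \<in> disjoint_edge_pairs V E"
    unfolding disjoint_edge_pairs_def by (auto simp: doubleton_in_edges_iff[OF assms])
  then show "p \<in> (\<lambda>(e, f). {e, f}) ` disjoint_edge_pairs V E"
    by (rule rev_image_eqI) (simp add: p)
next
  fix p assume "p \<in> (\<lambda>(e, f). {e, f}) ` disjoint_edge_pairs V E"
  then obtain e f where p: "p = {e, f}" and "e \<in> edges V E" "f \<in> edges V E"
    and disjoint: "e \<inter> f = {}"
    unfolding disjoint_edge_pairs_def by auto
  obtain s t where st: "e = {s, t}" "E s t"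
    using edgesE[OF assms \<open>e \<in> edges V E\<close>] by blast
  obtain u v where uv: "f = {u, v}" "E u v"
    using edgesE[OF assms \<open>f \<in> edges V E\<close>] by blast
  have "s \<noteq> u" "s \<noteq> v" "t \<noteq> u" "t \<noteq> v"
    using disjoint unfolding st uv by auto
  moreover have "s \<noteq> t" "u \<noteq> v"
    using st(2) uv(2) simple_graphD(3)[OF assms] by auto
  ultimately show "p \<in> Qpairs V E"
    unfolding p st uv Qpairs_def using st(2) uv(2) by blast
qed

lemma triangle_edge_pair_Diff_vertex:
  assumes G: "simple_graph V E" and AF: "(A, F) \<in> triangle_edge_pairs V E" and "w \<in> A"
  shows "(A - {w}, F) \<in> disjoint_edge_pairs V E"
    and "w \<in> common_nbhd_outside V E (A - {w}) (A - {w} \<union> F)"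
proof -
  from AF have A: "A \<subseteq> V" "card A = 3" "\<forall>x\<in>A. \<forall>y\<in>A. x \<noteq> y \<longrightarrow> E x y"
    and F: "F \<in> edges V E" "A \<inter> F = {}"
    by (auto simp: triangle_edge_pairs_def triangles_def)
  from A(2) \<open>w \<in> A\<close> have "card (A - {w}) = 2"
    by simp
  then obtain x y where xy: "A - {w} = {x, y}" "x \<noteq> y"
    by (auto simp: card_2_iff)
  then have "E x y"
    using A(3) by blast
  with xy(1) F show "(A - {w}, F) \<in> disjoint_edge_pairs V E"
    unfolding disjoint_edge_pairs_def by (auto simp: doubleton_in_edges_iff[OF G])
  show "w \<in> common_nbhd_outside V E (A - {w}) (A - {w} \<union> F)"
    using A F \<open>w \<in> A\<close> unfolding common_nbhd_outside_def by blast
qed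

lemma triangle_edge_pair_insert_common_nbhd:
  assumes G: "simple_graph V E" and ef: "(e, f) \<in> disjoint_edge_pairs V E"
    and w: "w \<in> common_nbhd_outside V E e (e \<union> f)"
  shows "(insert w e, f) \<in> triangle_edge_pairs V E"
proof -
  from ef have "e \<in> edges V E" "f \<in> edges V E" "e \<inter> f = {}"
    unfolding disjoint_edge_pairs_def by auto
  moreover obtain s t where st: "e = {s, t}" "s \<noteq> t" "E s t" "s \<in> V" "t \<in> V"
    using edgesE[OF G \<open>e \<in> edges V E\<close>] by blast
  moreover from w st have "w \<in> V" "w \<notin> e" "w \<notin> f" "E s w" "E t w"
    unfolding common_nbhd_outside_def by auto
  moreover from \<open>E s t\<close> \<open>E s w\<close> \<open>E t w\<close> have "E t s" "E w s" "E w t"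
    using simple_graphD(2)[OF G] by blast+
  ultimately show ?thesis
    unfolding triangle_edge_pairs_def triangles_def by (auto simp: card_insert_if)
qed

lemma bij_betw_marked_triangles:
  assumes "simple_graph V E"
  shows "bij_betw (\<lambda>((A, F), w). ((A - {w}, F), w))
    (SIGMA (A, F):triangle_edge_pairs V E. A)
    (SIGMA (e, f):disjoint_edge_pairs V E. common_nbhd_outside V E e (e \<union> f))"
proof (rule bij_betw_byWitness[where f' = "\<lambda>((e, f), w). ((insert w e, f), w)"])
  show "\<forall>a\<in>SIGMA (A, F):triangle_edge_pairs V E. A.
      (\<lambda>((e, f), w). ((insert w e, f), w)) ((\<lambda>((A, F), w). ((A - {w}, F), w)) a) = a"
    by (auto simp: insert_absorb)
  show "\<forall>a\<in>SIGMA (e, f):disjoint_edge_pairs V E. common_nbhd_outside V E e (e \<union> f).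
      (\<lambda>((A, F), w). ((A - {w}, F), w)) ((\<lambda>((e, f), w). ((insert w e, f), w)) a) = a"
    by (auto simp: common_nbhd_outside_def)
  show "(\<lambda>((A, F), w). ((A - {w}, F), w)) ` (SIGMA (A, F):triangle_edge_pairs V E. A)
      \<subseteq> (SIGMA (e, f):disjoint_edge_pairs V E. common_nbhd_outside V E e (e \<union> f))"
    using triangle_edge_pair_Diff_vertex[OF assms] by auto
  show "(\<lambda>((e, f), w). ((insert w e, f), w))
      ` (SIGMA (e, f):disjoint_edge_pairs V E. common_nbhd_outside V E e (e \<union> f))
      \<subseteq> (SIGMA (A, F):triangle_edge_pairs V E. A)"
    using triangle_edge_pair_insert_common_nbhd[OF assms] by auto
qed

lemma sum_card_common_nbhd_outside:
  assumes G: "simple_graph V E"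
  shows "(\<Sum>(e, f)\<in>disjoint_edge_pairs V E. card (common_nbhd_outside V E e (e \<union> f)))
    = 3 * card (triangle_edge_pairs V E)"
proof -
  have "(\<Sum>(e, f)\<in>disjoint_edge_pairs V E. card (common_nbhd_outside V E e (e \<union> f)))
      = card (SIGMA (e, f):disjoint_edge_pairs V E. common_nbhd_outside V E e (e \<union> f))"
    using finite_disjoint_edge_pairs[OF G] simple_graphD(1)[OF G]
    by (subst card_SigmaI) (auto simp: case_prod_unfold common_nbhd_outside_def)
  also have "\<dots> = card (SIGMA (A, F):triangle_edge_pairs V E. A)"
    using bij_betw_same_card[OF bij_betw_marked_triangles[OF G]] by simp
  also have "\<dots> = (\<Sum>(A, F)\<in>triangle_edge_pairs V E. card A)"
    using finite_triangle_edge_pairs[OF G] simple_graphD(1)[OF G]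
    by (subst card_SigmaI) (auto simp: case_prod_unfold triangle_edge_pairs_def triangles_def
        intro: finite_subset)
  also have "\<dots> = 3 * card (triangle_edge_pairs V E)"
    by (simp add: triangle_edge_pairs_def triangles_def case_prod_unfold)
  finally show ?thesis .
qed

theorem proposition4:
  fixes V :: "'a set" and E :: "'a \<Rightarrow> 'a \<Rightarrow> bool"
  assumes "simple_graph V E"
  shows "real (subgraph_count V E C3_L2_vertices C3_L2_edges)
           = (1/3) * (\<Sum>p\<in>Qpairs V E. Q_term V E p)"
proof -
  have "(\<Sum>p\<in>Qpairs V E. Q_term V E p)
      = (\<Sum>p\<in>Qpairs V E. \<Sum>e\<in>p. real (card (common_nbhd_outside V E e (\<Union>p))))"
    using Q_term_eq_sum_card[OF assms] by simp
  also have "\<dots> = (\<Sum>(e, f)\<in>disjoint_edge_pairs V E. real (card (common_nbhd_outside V E e (e \<union> f))))"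
    unfolding Qpairs_eq_image[OF assms]
    by (subst sum_over_unordered_pairs)
      (simp_all add: finite_disjoint_edge_pairs sym_disjoint_edge_pairs
        irrefl_disjoint_edge_pairs assms)
  also have "\<dots> = real (3 * card (triangle_edge_pairs V E))"
    unfolding sum_card_common_nbhd_outside[OF assms, symmetric] by (simp add: of_nat_sum case_prod_unfold)
  finally show ?thesis
    by (simp add: subgraph_count_C3_L2[OF assms])
qed

end
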